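(* Let $\Sigma\in\mathbb{R}^{N\times N}$ be symmetric positive definite, $\mu\in\mathbb{R}^N$, $\gamma\in[0,1]$, and let $L,R\subseteq\{1,\dots,N\}$ be disjoint nonempty index sets. For representatives $\hat w_L\in\mathbb{R}^{|L|}$, $\hat w_R\in\mathbb{R}^{|R|}$ define $v_L=\hat w_L^\top\Sigma_{LL}\hat w_L$, $s_L=\hat w_L^\top\mu_L$, $v_R=\hat w_R^\top\Sigma_{RR}\hat w_R$, $s_R=\hat w_R^\top\mu_R$, $c=\hat w_L^\top\Sigma_{LR}\hat w_R$, \[ \alpha_L^{\mathrm{raw}}=\frac{v_Rs_L-\gamma cs_R}{v_Lv_R-\gamma^2c^2},\qquad \alpha_R^{\mathrm{raw}}=\frac{v_Ls_R-\gamma cs_L}{v_Lv_R-\gamma^2c^2}, \] $\alpha_k=\alpha_k^{\mathrm{raw}}/(|\alpha_L^{\mathrm{raw}}|+|\alpha_R^{\mathrm{raw}}|)$ for $k\in\{L,R\}$, and the combined node portfolio $(\alpha_L\hat w_L,\alpha_R\hat w_R)\in\mathbb{R}^{L\cup R}$. Fix $\hat w_R$ and let $k>0$. Then the combined node portfolio obtained from $(k\hat w_L,\hat w_R)$ lies on the same ray as the one obtained from $(\hat w_L,\hat w_R)$, i.e.\ it equals it multiplied by a strictly positive scalar (whenever both are defined).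
   Context: $\Sigma_{LL},\Sigma_{LR},\Sigma_{RR}$ denote submatrices of $\Sigma$ indexed by the given index sets and $\mu_L,\mu_R$ the corresponding subvectors of $\mu$. This is the node-level step (with $L^1$ normalisation) of the HRP-$\Sigma\mu$ allocator. *)

theory Defs
  imports "HOL-Analysis.Analysis"
begin

text \<open>Covariance matrix Sigma : real^'n^'n (index type 'n = {1..N}); index sets L R :: 'n set;
  representatives of w_L, w_R are functions 'n => real of which only the values on L (resp. R) matter.\<close>

definition sym_posdef :: "real^'n^'n \<Rightarrow> bool" where
  "sym_posdef S \<longleftrightarrow> transpose S = S \<and> (\<forall>x. x \<noteq> 0 \<longrightarrow> x \<bullet> (S *v x) > 0)"

definition bilin :: "real^'n^'n \<Rightarrow> 'n set \<Rightarrow> 'n set \<Rightarrow> ('n \<Rightarrow> real) \<Rightarrow> ('n \<Rightarrow> real) \<Rightarrow> real" where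
  "bilin S A B x y = (\<Sum>i\<in>A. \<Sum>j\<in>B. x i * S$i$j * y j)"

definition lin :: "real^'n \<Rightarrow> 'n set \<Rightarrow> ('n \<Rightarrow> real) \<Rightarrow> real" where
  "lin mu A x = (\<Sum>i\<in>A. x i * mu$i)"

definition node_denom :: "real^'n^'n \<Rightarrow> real \<Rightarrow> 'n set \<Rightarrow> 'n set \<Rightarrow> ('n \<Rightarrow> real) \<Rightarrow> ('n \<Rightarrow> real) \<Rightarrow> real" where
  "node_denom S \<gamma> L R wL wR =
     bilin S L L wL wL * bilin S R R wR wR - \<gamma>^2 * (bilin S L R wL wR)^2"

definition alpha_L_raw :: "real^'n^'n \<Rightarrow> real^'n \<Rightarrow> real \<Rightarrow> 'n set \<Rightarrow> 'n set \<Rightarrow> ('n \<Rightarrow> real) \<Rightarrow> ('n \<Rightarrow> real) \<Rightarrow> real" where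
  "alpha_L_raw S mu \<gamma> L R wL wR =
     (bilin S R R wR wR * lin mu L wL - \<gamma> * bilin S L R wL wR * lin mu R wR) / node_denom S \<gamma> L R wL wR"

definition alpha_R_raw :: "real^'n^'n \<Rightarrow> real^'n \<Rightarrow> real \<Rightarrow> 'n set \<Rightarrow> 'n set \<Rightarrow> ('n \<Rightarrow> real) \<Rightarrow> ('n \<Rightarrow> real) \<Rightarrow> real" where
  "alpha_R_raw S mu \<gamma> L R wL wR =
     (bilin S L L wL wL * lin mu R wR - \<gamma> * bilin S L R wL wR * lin mu L wL) / node_denom S \<gamma> L R wL wR"

definition alpha_norm :: "real^'n^'n \<Rightarrow> real^'n \<Rightarrow> real \<Rightarrow> 'n set \<Rightarrow> 'n set \<Rightarrow> ('n \<Rightarrow> real) \<Rightarrow> ('n \<Rightarrow> real) \<Rightarrow> real" where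
  "alpha_norm S mu \<gamma> L R wL wR = \<bar>alpha_L_raw S mu \<gamma> L R wL wR\<bar> + \<bar>alpha_R_raw S mu \<gamma> L R wL wR\<bar>"

definition node_defined :: "real^'n^'n \<Rightarrow> real^'n \<Rightarrow> real \<Rightarrow> 'n set \<Rightarrow> 'n set \<Rightarrow> ('n \<Rightarrow> real) \<Rightarrow> ('n \<Rightarrow> real) \<Rightarrow> bool" where
  "node_defined S mu \<gamma> L R wL wR \<longleftrightarrow>
     node_denom S \<gamma> L R wL wR \<noteq> 0 \<and> alpha_norm S mu \<gamma> L R wL wR \<noteq> 0"

definition node_portfolio :: "real^'n^'n \<Rightarrow> real^'n \<Rightarrow> real \<Rightarrow> 'n set \<Rightarrow> 'n set \<Rightarrow> ('n \<Rightarrow> real) \<Rightarrow> ('n \<Rightarrow> real) \<Rightarrow> 'n \<Rightarrow> real" where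
  "node_portfolio S mu \<gamma> L R wL wR i =
     (if i \<in> L then (alpha_L_raw S mu \<gamma> L R wL wR / alpha_norm S mu \<gamma> L R wL wR) * wL i
      else if i \<in> R then (alpha_R_raw S mu \<gamma> L R wL wR / alpha_norm S mu \<gamma> L R wL wR) * wR i
      else 0)"

end

theory Submission
  imports Defs
begin

text \<open>Rescaling the left representative by k > 0 multiplies v_L by k^2, c and s_L by k, and hence
  the denominator by k^2. So the raw weight of the left block becomes alpha_L^raw / k while that of
  the right block is unchanged: the unnormalised portfolio (alpha_L^raw w_L, alpha_R^raw w_R) is
  invariant, and the L^1 normalisations differ by a positive factor.\<close>

lemma bilin_scale_left: "bilin S A B (\<lambda>i. k * x i) y = k * bilin S A B x y"
  unfolding bilin_def by (simp add: sum_distrib_left mult_ac)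

lemma bilin_scale_right: "bilin S A B x (\<lambda>j. k * y j) = k * bilin S A B x y"
  unfolding bilin_def by (simp add: sum_distrib_left mult_ac)

lemma lin_scale: "lin mu A (\<lambda>i. k * x i) = k * lin mu A x"
  unfolding lin_def by (simp add: sum_distrib_left mult_ac)

lemma node_denom_scale_left:
  "node_denom S \<gamma> L R (\<lambda>i. k * wL i) wR = k^2 * node_denom S \<gamma> L R wL wR"
  unfolding node_denom_def bilin_scale_left bilin_scale_right
  by (simp add: algebra_simps power2_eq_square)

lemma alpha_L_raw_scale_left:
  assumes "k \<noteq> 0"
  shows "alpha_L_raw S mu \<gamma> L R (\<lambda>i. k * wL i) wR = alpha_L_raw S mu \<gamma> L R wL wR / k"
  unfolding alpha_L_raw_def node_denom_scale_left bilin_scale_left lin_scale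
  using assms by (cases "node_denom S \<gamma> L R wL wR = 0") (simp_all add: field_simps power2_eq_square)

lemma alpha_R_raw_scale_left:
  assumes "k \<noteq> 0"
  shows "alpha_R_raw S mu \<gamma> L R (\<lambda>i. k * wL i) wR = alpha_R_raw S mu \<gamma> L R wL wR"
  unfolding alpha_R_raw_def node_denom_scale_left bilin_scale_left bilin_scale_right lin_scale
  using assms by (cases "node_denom S \<gamma> L R wL wR = 0") (simp_all add: field_simps power2_eq_square)

lemma node_portfolio_scale_left:
  assumes "k \<noteq> 0" and "alpha_norm S mu \<gamma> L R wL wR \<noteq> 0"
  shows "node_portfolio S mu \<gamma> L R (\<lambda>i. k * wL i) wR
       = (\<lambda>i. alpha_norm S mu \<gamma> L R wL wR / alpha_norm S mu \<gamma> L R (\<lambda>i. k * wL i) wR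
              * node_portfolio S mu \<gamma> L R wL wR i)"
  unfolding node_portfolio_def alpha_L_raw_scale_left[OF assms(1)] alpha_R_raw_scale_left[OF assms(1)]
  using assms by (auto simp: field_simps)

lemma alpha_norm_pos_if_node_defined:
  "node_defined S mu \<gamma> L R wL wR \<Longrightarrow> alpha_norm S mu \<gamma> L R wL wR > 0"
  unfolding node_defined_def alpha_norm_def by auto

theorem mainTheorem12:
  fixes S :: "real^'n^'n" and mu :: "real^'n" and \<gamma> k :: real
    and L R :: "'n set" and wL wR :: "'n \<Rightarrow> real"
  assumes "sym_posdef S"
    and "0 \<le> \<gamma>" and "\<gamma> \<le> 1"
    and "L \<inter> R = {}" and "L \<noteq> {}" and "R \<noteq> {}"
    and "k > 0"
    and "node_defined S mu \<gamma> L R wL wR"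
    and "node_defined S mu \<gamma> L R (\<lambda>i. k * wL i) wR"
  shows "\<exists>t>0. node_portfolio S mu \<gamma> L R (\<lambda>i. k * wL i) wR
                = (\<lambda>i. t * node_portfolio S mu \<gamma> L R wL wR i)"
proof (intro exI conjI)
  show "alpha_norm S mu \<gamma> L R wL wR / alpha_norm S mu \<gamma> L R (\<lambda>i. k * wL i) wR > 0"
    using assms(8,9) by (simp add: alpha_norm_pos_if_node_defined)
  show "node_portfolio S mu \<gamma> L R (\<lambda>i. k * wL i) wR
      = (\<lambda>i. alpha_norm S mu \<gamma> L R wL wR / alpha_norm S mu \<gamma> L R (\<lambda>i. k * wL i) wR
             * node_portfolio S mu \<gamma> L R wL wR i)"
    using assms(7,8) by (simp add: node_portfolio_scale_left node_defined_def)
qed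

end
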